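(* Let $\Pi^{(1)},\Pi^{(2)}$ be two projectors on a finite-dimensional Hilbert space $\mathcal{H}$. For every $\delta>0$ there exists a projector $\Pi^\star$ on $\mathcal{H}$ such that for all quantum states $\rho\in\mathcal{D}(\mathcal{H})$, $$\mathrm{Tr}[\Pi^\star\rho]\ge\max\{\mathrm{Tr}[\Pi^{(1)}\rho],\mathrm{Tr}[\Pi^{(2)}\rho]\}-\delta,$$ and $$\Pi^\star\preceq\frac{2}{\delta^2}\left(\Pi^{(1)}+\Pi^{(2)}\right).$$
   Context: $\mathcal{D}(\mathcal{H})$ is the set of density operators on $\mathcal{H}$; $P\preceq Q$ means $Q-P$ is positive semi-definite. *)

theory Defs
  imports "HOL-Analysis.Analysis"
begin

definition conj_transpose :: "complex^'n^'n \<Rightarrow> complex^'n^'n" where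
  "conj_transpose A = (\<chi> i j. cnj (A $ j $ i))"

definition hermitian :: "complex^'n^'n \<Rightarrow> bool" where
  "hermitian A \<longleftrightarrow> conj_transpose A = A"

definition is_projector :: "complex^'n^'n \<Rightarrow> bool" where
  "is_projector P \<longleftrightarrow> P ** P = P \<and> hermitian P"

definition psd :: "complex^'n^'n \<Rightarrow> bool" where
  "psd A \<longleftrightarrow> hermitian A \<and> (\<forall>x::complex^'n. 0 \<le> Re (\<Sum>i\<in>UNIV. cnj (x $ i) * (A *v x) $ i))"

definition density :: "complex^'n^'n \<Rightarrow> bool" where
  "density \<rho> \<longleftrightarrow> psd \<rho> \<and> trace \<rho> = 1"

definition loewner_le :: "complex^'n^'n \<Rightarrow> complex^'n^'n \<Rightarrow> bool" where
  "loewner_le P Q \<longleftrightarrow> psd (Q - P)"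

end

theory Submission
  imports Defs
begin

text \<open>Put \<open>A = P1 + P2\<close> and let \<open>\<Pi>\<close> project onto the span of the eigenvectors of \<open>A\<close> with
  eigenvalue at least \<open>\<delta>\<^sup>2/2\<close>; then \<open>\<Pi> \<preceq> (2/\<delta>\<^sup>2) A\<close> as all eigenvalues of \<open>A\<close> are nonnegative. Let \<open>P\<close> be \<open>P1\<close> or \<open>P2\<close>
  and split \<open>x = y + z\<close> with \<open>y = \<Pi> x\<close>. Since \<open>P \<preceq> A\<close>, we get \<open>|P z|\<^sup>2 \<le> \<langle>z, A z\<rangle> \<le> (\<delta>\<^sup>2/2) |z|\<^sup>2\<close>,
  and \<open>|P x| \<le> |y| + |P z|\<close> together with AM-GM gives \<open>\<langle>x, P x\<rangle> \<le> \<langle>x, \<Pi> x\<rangle> + \<delta> |x|\<^sup>2\<close>.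
  Averaging this over an orthonormal eigenbasis of \<open>\<rho>\<close> yields the trace inequality.
  The spectral theorem for Hermitian matrices, used for \<open>A\<close> and for \<open>\<rho>\<close>, is proved by
  maximising the quadratic form on the unit sphere of the orthogonal complement of the
  eigenvectors found so far.\<close>

definition cinner :: "complex^'n \<Rightarrow> complex^'n \<Rightarrow> complex" where
  "cinner x y = (\<Sum>i\<in>UNIV. cnj (x $ i) * y $ i)"

lemma cinner_add_right: "cinner x (y + z) = cinner x y + cinner x z"
  by (simp add: cinner_def distrib_left sum.distrib)

lemma cinner_add_left: "cinner (x + y) z = cinner x z + cinner y z"
  by (simp add: cinner_def distrib_right sum.distrib)

lemma cinner_diff_right: "cinner x (y - z) = cinner x y - cinner x z"
  by (simp add: cinner_def right_diff_distrib sum_subtractf)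

lemma cinner_diff_left: "cinner (x - y) z = cinner x z - cinner y z"
  by (simp add: cinner_def left_diff_distrib sum_subtractf)

lemma cinner_scale_right: "cinner x (c *s y) = c * cinner x y"
  by (simp add: cinner_def sum_distrib_left algebra_simps)

lemma cinner_scale_left: "cinner (c *s x) y = cnj c * cinner x y"
  by (simp add: cinner_def sum_distrib_left algebra_simps)

lemma cinner_zero_left [simp]: "cinner 0 y = 0"
  and cinner_zero_right [simp]: "cinner x 0 = 0"
  by (simp_all add: cinner_def)

lemma cinner_sum_right: "cinner x (sum f K) = (\<Sum>u\<in>K. cinner x (f u))"
  by (induct K rule: infinite_finite_induct) (simp_all add: cinner_add_right)

lemma cinner_commute: "cinner y x = cnj (cinner x y)"
  by (simp add: cinner_def mult.commute)

lemma cinner_self: "cinner x x = of_real ((norm x)\<^sup>2)"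
proof -
  have "(norm x)\<^sup>2 = (\<Sum>i\<in>UNIV. (norm (x $ i))\<^sup>2)"
    unfolding norm_vec_def L2_set_def by (simp add: sum_nonneg)
  have "cinner x x = (\<Sum>i\<in>UNIV. of_real ((norm (x $ i))\<^sup>2))"
    unfolding cinner_def by (intro sum.cong refl) (simp add: complex_norm_square[symmetric] mult.commute)
  also have "\<dots> = of_real ((norm x)\<^sup>2)" unfolding \<open>(norm x)\<^sup>2 = _\<close> of_real_sum ..
  finally show ?thesis .
qed

lemma cinner_self_eq_zero_iff: "cinner x x = 0 \<longleftrightarrow> x = 0"
  by (simp add: cinner_self)

lemma Re_cinner_eq_inner: "Re (cinner x y) = inner x y"
  by (simp add: inner_vec_def cinner_def inner_complex_def)

lemma matrix_vector_mult_scale: "A *v (c *s x) = c *s (A *v (x::complex^'n))"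
  by (simp add: vec_eq_iff matrix_vector_mult_def sum_distrib_left mult_ac)

lemma matrix_vector_mult_sum: "A *v (sum f K) = (\<Sum>u\<in>K. A *v (f u::complex^'n))"
  by (induct K rule: infinite_finite_induct) (simp_all add: matrix_vector_right_distrib)

lemma scaleR_eq_scale_of_real: "r *\<^sub>R y = complex_of_real r *s (y::complex^'n)"
  by (simp add: vec_eq_iff scaleR_conv_of_real[where 'a=complex])

lemma cinner_scaleR_right: "cinner x (r *\<^sub>R y) = of_real r * cinner x y"
  by (simp add: scaleR_eq_scale_of_real cinner_scale_right)

definition qform :: "complex^'n^'n \<Rightarrow> complex^'n \<Rightarrow> real" where
  "qform A x = Re (cinner x (A *v x))"

lemma psd_iff_qform: "psd A \<longleftrightarrow> hermitian A \<and> (\<forall>x. 0 \<le> qform A x)"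
  unfolding psd_def qform_def cinner_def ..

lemma qform_add: "qform (A + B) x = qform A x + qform B x"
  by (simp add: qform_def matrix_vector_mult_add_rdistrib cinner_add_right)

lemma qform_diff: "qform (A - B) x = qform A x - qform B x"
  by (simp add: qform_def matrix_vector_mult_diff_rdistrib cinner_diff_right)

lemma qform_scaleR: "qform (c *\<^sub>R A) x = c * qform A x"
proof -
  have "(c *\<^sub>R A) *v x = of_real c *s (A *v x)"
    by (simp add: vec_eq_iff matrix_vector_mult_def sum_distrib_left mult_ac
        scaleR_conv_of_real[where 'a=complex])
  then show ?thesis by (simp add: qform_def cinner_scale_right)
qed

lemma cnj_mult_self: "cnj c * c = of_real ((cmod c)\<^sup>2)"
  by (metis complex_norm_square mult.commute)

lemma qform_scale_vector: "qform A (c *s x) = (cmod c)\<^sup>2 * qform A x"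
proof -
  have "cinner (c *s x) (A *v (c *s x)) = of_real ((cmod c)\<^sup>2) * cinner x (A *v x)"
    by (metis cinner_scale_left cinner_scale_right cnj_mult_self matrix_vector_mult_scale mult.assoc)
  then show ?thesis by (simp add: qform_def)
qed

lemma qform_mat_1: "qform (mat 1) x = (norm x)\<^sup>2"
  by (simp add: qform_def cinner_self)

lemma hermitian_iff: "hermitian M \<longleftrightarrow> (\<forall>i j. cnj (M $ i $ j) = M $ j $ i)"
  unfolding hermitian_def conj_transpose_def vec_eq_iff by auto

lemma hermitian_add: "hermitian M \<Longrightarrow> hermitian N \<Longrightarrow> hermitian (M + N)"
  unfolding hermitian_iff by simp

lemma hermitian_scaleR_diff: "hermitian M \<Longrightarrow> hermitian N \<Longrightarrow> hermitian (c *\<^sub>R M - N)"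
  unfolding hermitian_iff by (simp add: scaleR_conv_of_real[where 'a=complex])

lemma hermitian_cinner_adjoint:
  assumes "hermitian A"
  shows "cinner x (A *v y) = cinner (A *v x) y"
proof -
  have "cinner x (A *v y) = (\<Sum>i\<in>UNIV. \<Sum>j\<in>UNIV. cnj (x $ i) * A $ i $ j * y $ j)"
    by (simp add: cinner_def matrix_vector_mult_def sum_distrib_left mult.assoc)
  also have "\<dots> = (\<Sum>j\<in>UNIV. \<Sum>i\<in>UNIV. cnj (x $ i) * A $ i $ j * y $ j)"
    by (rule sum.swap)
  also have "\<dots> = cinner (A *v x) y"
    using assms unfolding cinner_def matrix_vector_mult_def hermitian_iff
    by (simp add: sum_distrib_right sum_distrib_left mult_ac)
  finally show ?thesis .
qed

lemma hermitian_cinner_self_real: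
  assumes "hermitian A"
  shows "cinner x (A *v x) = of_real (qform A x)"
proof -
  have "cnj (cinner x (A *v x)) = cinner x (A *v x)"
    using cinner_commute[of "A *v x" x] hermitian_cinner_adjoint[OF assms, of x x] by simp
  then show ?thesis
    unfolding qform_def by (metis Reals_cnj_iff Re_complex_of_real Reals_cases)
qed

lemma loewner_le_of_qform:
  assumes "hermitian M" "hermitian N" "\<And>x. qform N x \<le> c * qform M x"
  shows "loewner_le N (c *\<^sub>R M)"
  using assms unfolding loewner_le_def psd_iff_qform
  by (simp add: hermitian_scaleR_diff qform_diff qform_scaleR)

lemma projector_hermitian: "is_projector P \<Longrightarrow> hermitian P"
  unfolding is_projector_def by blast

lemma projector_cinner_self:
  assumes "is_projector P"
  shows "cinner (P *v x) (P *v x) = cinner x (P *v x)"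
proof -
  have "cinner (P *v x) (P *v x) = cinner x (P *v (P *v x))"
    by (rule hermitian_cinner_adjoint[OF projector_hermitian[OF assms], symmetric])
  also have "P *v (P *v x) = P *v x"
    using assms unfolding is_projector_def by (simp add: matrix_vector_mul_assoc)
  finally show ?thesis .
qed

lemma projector_qform:
  assumes "is_projector P"
  shows "qform P x = (norm (P *v x))\<^sup>2"
  using projector_cinner_self[OF assms, of x] unfolding qform_def cinner_self
  by (metis Re_complex_of_real)

lemma projector_norm_le:
  assumes "is_projector P"
  shows "norm (P *v x) \<le> norm x"
proof -
  have "cinner (P *v x) x = cinner x (P *v x)"
    using hermitian_cinner_adjoint[OF projector_hermitian[OF assms], of x x] by simp
  then have "cinner (x - P *v x) (x - P *v x) = cinner x x - cinner (P *v x) (P *v x)"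
    by (simp add: cinner_diff_left cinner_diff_right projector_cinner_self[OF assms])
  then have "(norm (x - P *v x))\<^sup>2 = (norm x)\<^sup>2 - (norm (P *v x))\<^sup>2"
    unfolding cinner_self by (metis Re_complex_of_real of_real_diff)
  then have "(norm (P *v x))\<^sup>2 \<le> (norm x)\<^sup>2"
    by (metis diff_ge_0_iff_ge zero_le_power2)
  then show ?thesis by (rule power2_le_imp_le) simp
qed

definition orthonormal :: "(complex^'n) set \<Rightarrow> bool" where
  "orthonormal B \<longleftrightarrow> (\<forall>u\<in>B. cinner u u = 1) \<and> (\<forall>u\<in>B. \<forall>w\<in>B. u \<noteq> w \<longrightarrow> cinner u w = 0)"

lemma orthonormal_subset: "orthonormal B \<Longrightarrow> K \<subseteq> B \<Longrightarrow> orthonormal K"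
  unfolding orthonormal_def by blast

lemma orthonormal_insert:
  assumes "orthonormal B" "cinner v v = 1" "\<forall>u\<in>B. cinner u v = 0"
  shows "orthonormal (insert v B)"
  using assms cinner_commute[of v] unfolding orthonormal_def by (metis complex_cnj_zero insert_iff)

lemma orthonormal_independent:
  assumes "orthonormal B"
  shows "independent B"
proof (rule pairwise_orthogonal_independent)
  show "pairwise orthogonal B"
    using assms unfolding orthonormal_def pairwise_def orthogonal_def Re_cinner_eq_inner[symmetric]
    by simp
  show "0 \<notin> B"
    using assms unfolding orthonormal_def by force
qed

lemma orthonormal_finite: "orthonormal B \<Longrightarrow> finite B"
  and orthonormal_card_le: "orthonormal B \<Longrightarrow> card B \<le> DIM(complex^'n)"
  for B :: "(complex^'n) set"
  using independent_bound[OF orthonormal_independent] by auto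

lemma orthonormal_cinner_sum:
  assumes "orthonormal K" "w \<in> K"
  shows "cinner w (\<Sum>u\<in>K. b u *s u) = b w"
proof -
  have "cinner w (\<Sum>u\<in>K. b u *s u) = b w * cinner w w + (\<Sum>u\<in>K-{w}. b u * cinner w u)"
    using assms orthonormal_finite[OF assms(1)]
    by (simp add: sum.remove cinner_add_right cinner_sum_right cinner_scale_right)
  also have "(\<Sum>u\<in>K-{w}. b u * cinner w u) = 0"
    using assms unfolding orthonormal_def by (intro sum.neutral) auto
  finally show ?thesis
    using assms unfolding orthonormal_def by simp
qed

definition proj :: "(complex^'n) set \<Rightarrow> complex^'n^'n" where
  "proj J = (\<chi> i j. \<Sum>u\<in>J. u $ i * cnj (u $ j))"

lemma matrix_vector_mult_proj: "proj J *v x = (\<Sum>u\<in>J. cinner u x *s u)"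
  by (simp add: vec_eq_iff proj_def matrix_vector_mult_def cinner_def
      sum_distrib_left sum_distrib_right mult_ac sum.swap[of _ J])

lemma hermitian_proj: "hermitian (proj J)"
  by (simp add: hermitian_def conj_transpose_def proj_def vec_eq_iff mult.commute)

lemma proj_union:
  assumes "finite J" "finite K" "J \<inter> K = {}"
  shows "proj (J \<union> K) = proj J + proj K"
  using assms by (simp add: proj_def vec_eq_iff sum.union_disjoint)

lemma cinner_proj:
  assumes "orthonormal J" "u \<in> J"
  shows "cinner u (proj J *v x) = cinner u x"
  unfolding matrix_vector_mult_proj by (rule orthonormal_cinner_sum[OF assms])

lemma is_projector_proj:
  assumes "orthonormal J"
  shows "is_projector (proj J)"
proof -
  have "proj J *v (proj J *v x) = proj J *v x" for x
  proof -
    have "proj J *v (proj J *v x) = (\<Sum>u\<in>J. cinner u (proj J *v x) *s u)"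
      by (rule matrix_vector_mult_proj)
    also have "\<dots> = (\<Sum>u\<in>J. cinner u x *s u)"
      by (rule sum.cong) (simp_all add: cinner_proj[OF assms])
    finally show ?thesis
      by (simp add: matrix_vector_mult_proj)
  qed
  then show ?thesis
    unfolding is_projector_def by (simp add: matrix_eq hermitian_proj matrix_vector_mul_assoc)
qed

lemma qform_proj: "qform (proj J) x = (\<Sum>u\<in>J. (cmod (cinner u x))\<^sup>2)"
proof -
  have "cinner x (proj J *v x) = (\<Sum>u\<in>J. of_real ((cmod (cinner u x))\<^sup>2))"
    unfolding matrix_vector_mult_proj cinner_sum_right cinner_scale_right
    by (rule sum.cong[OF refl]) (simp only: cinner_commute[of x] complex_norm_square)
  then show ?thesis
    unfolding qform_def by (simp flip: of_real_sum)
qed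

lemma norm_proj_sq:
  assumes "orthonormal J"
  shows "(norm (proj J *v x))\<^sup>2 = (\<Sum>u\<in>J. (cmod (cinner u x))\<^sup>2)"
  using projector_qform[OF is_projector_proj[OF assms]] qform_proj by metis

section \<open>Spectral theorem for Hermitian matrices\<close>

lemma norm_sq_add_scaled_orthogonal:
  assumes "cinner v v = 1" "cinner v w = 0"
  shows "(norm (v + s *s w))\<^sup>2 = 1 + (cmod s)\<^sup>2 * (norm w)\<^sup>2"
proof -
  have "cinner w v = 0"
    using assms(2) cinner_commute[of w v] by simp
  then have "cinner (v + s *s w) (v + s *s w) = 1 + (cnj s * s) * cinner w w"
    using assms by (simp add: cinner_add_left cinner_add_right cinner_scale_left cinner_scale_right
        mult.assoc)
  then have "cinner (v + s *s w) (v + s *s w) = 1 + of_real ((cmod s)\<^sup>2) * cinner w w"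
    by (simp only: cnj_mult_self)
  then show ?thesis
    unfolding cinner_self by (metis Re_complex_of_real of_real_1 of_real_add of_real_mult)
qed

lemma qform_add_scaled:
  assumes "hermitian A"
  shows "qform A (v + s *s w) = qform A v + 2 * Re (cnj s * cinner w (A *v v)) + (cmod s)\<^sup>2 * qform A w"
proof -
  define c where "c = cinner w (A *v v)"
  have "cinner v (A *v w) = cnj c"
    unfolding c_def using hermitian_cinner_adjoint[OF assms, of v w] cinner_commute[of "A *v v" w] by simp
  then have "cinner (v + s *s w) (A *v (v + s *s w))
      = cinner v (A *v v) + (s * cnj c + cnj s * c) + (cnj s * s) * cinner w (A *v w)"
    by (simp add: matrix_vector_mult_scale cinner_add_left cinner_add_right
        cinner_scale_left cinner_scale_right c_def algebra_simps)
  then have "cinner (v + s *s w) (A *v (v + s *s w))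
      = cinner v (A *v v) + (s * cnj c + cnj s * c) + of_real ((cmod s)\<^sup>2) * cinner w (A *v w)"
    by (simp only: cnj_mult_self)
  moreover have "Re (s * cnj c + cnj s * c) = 2 * Re (cnj s * c)"
    by simp
  ultimately show ?thesis
    unfolding qform_def c_def by simp
qed

lemma le_quadratic_imp_zero:
  fixes a b :: real
  assumes "\<And>s. 2 * s * a \<le> s\<^sup>2 * b"
  shows "a = 0"
proof (rule ccontr)
  assume "a \<noteq> 0"
  define s where "s = a / (2 * (\<bar>b\<bar> + 1))"
  have "s * a = a\<^sup>2 / (2 * (\<bar>b\<bar> + 1))"
    unfolding s_def power2_eq_square by simp
  also have "\<dots> > 0"
    using \<open>a \<noteq> 0\<close> by (intro divide_pos_pos) auto
  finally have sa: "s * a > 0" .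
  have "2 * s * a \<le> s\<^sup>2 * \<bar>b\<bar>"
    using assms[of s] by (smt (verit) abs_ge_self mult_left_mono zero_le_power2)
  also have "s\<^sup>2 * \<bar>b\<bar> = s * a * (\<bar>b\<bar> / (2 * (\<bar>b\<bar> + 1)))"
    unfolding s_def power2_eq_square by (simp add: field_simps)
  also have "\<dots> < s * a"
  proof -
    have "\<bar>b\<bar> / (2 * (\<bar>b\<bar> + 1)) < 1"
      by (simp add: field_simps)
    from mult_strict_left_mono[OF this sa] show ?thesis by simp
  qed
  finally show False
    using sa by (simp add: mult.commute)
qed

text \<open>First-order condition at a maximiser \<open>v\<close> of the Rayleigh quotient: the perturbation \<open>v + s w\<close>
  changes the quotient by \<open>2 Re (cnj s \<langle>w, A v\<rangle>) + O(|s|\<^sup>2)\<close>, so the linear term must vanish.\<close>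

lemma hermitian_max_stationary:
  assumes h: "hermitian A" and v: "cinner v v = 1" and vw: "cinner v w = 0"
    and max: "\<And>s. qform A (v + s *s w) \<le> qform A v * (norm (v + s *s w))\<^sup>2"
  shows "cinner w (A *v v) = 0"
proof -
  define c where "c = cinner w (A *v v)"
  define K where "K = qform A v * (norm w)\<^sup>2 - qform A w"
  have bound: "2 * Re (cnj s * c) \<le> (cmod s)\<^sup>2 * K" for s
    using max[of s] unfolding qform_add_scaled[OF h] norm_sq_add_scaled_orthogonal[OF v vw] K_def c_def
    by (simp add: algebra_simps)
  have "Re c = 0"
  proof (rule le_quadratic_imp_zero)
    show "2 * t * Re c \<le> t\<^sup>2 * K" for t
      using bound[of "of_real t"] by (simp add: mult.assoc)
  qed
  moreover have "Im c = 0"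
  proof (rule le_quadratic_imp_zero)
    show "2 * t * Im c \<le> t\<^sup>2 * K" for t
      using bound[of "\<i> * of_real t"] by (simp add: mult.assoc norm_mult)
  qed
  ultimately show ?thesis
    unfolding c_def by (simp add: complex_eq_iff)
qed

lemma qform_max_on_orthogonal_complement:
  fixes A :: "complex^'n^'n" and B :: "(complex^'n) set"
  assumes "x \<noteq> 0" "\<forall>u\<in>B. cinner u x = 0"
  obtains v where "cinner v v = 1" "\<forall>u\<in>B. cinner u v = 0"
    "\<And>y. \<forall>u\<in>B. cinner u y = 0 \<Longrightarrow> qform A y \<le> qform A v * (norm y)\<^sup>2"
proof -
  define S where "S = {y::complex^'n. norm y = 1 \<and> (\<forall>u\<in>B. cinner u y = 0)}"
  have unit_in_S: "(1 / norm y) *\<^sub>R y \<in> S" if "y \<noteq> 0" "\<forall>u\<in>B. cinner u y = 0" for y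
    using that unfolding S_def by (simp add: cinner_scaleR_right)
  have "S = sphere 0 1 \<inter> (\<Inter>u\<in>B. {y. cinner u y = 0})"
    unfolding S_def by auto
  moreover have "closed {y::complex^'n. cinner u y = 0}" for u
    unfolding cinner_def by (intro closed_Collect_eq continuous_intros)
  ultimately have "compact S"
    by (simp add: compact_Int_closed closed_INT)
  moreover have "continuous_on S (qform A)"
    unfolding qform_def cinner_def matrix_vector_mult_def by (intro continuous_intros)
  moreover have "S \<noteq> {}"
    using unit_in_S[OF assms] by blast
  ultimately obtain v where "v \<in> S" and vmax: "\<And>y. y \<in> S \<Longrightarrow> qform A y \<le> qform A v"
    using continuous_attains_sup by metis
  show thesis
  proof
    show "cinner v v = 1" "\<forall>u\<in>B. cinner u v = 0"
      using \<open>v \<in> S\<close> unfolding S_def by (simp_all add: cinner_self)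
    fix y assume "\<forall>u\<in>B. cinner u y = 0"
    show "qform A y \<le> qform A v * (norm y)\<^sup>2"
    proof (cases "y = 0")
      case False
      have "qform A ((1 / norm y) *\<^sub>R y) = qform A y / (norm y)\<^sup>2"
        by (simp add: scaleR_eq_scale_of_real qform_scale_vector norm_divide power_divide)
      with vmax[OF unit_in_S[OF False \<open>\<forall>u\<in>B. cinner u y = 0\<close>]] False
      show ?thesis by (simp add: divide_le_eq)
    qed (simp add: qform_def)
  qed
qed

lemma hermitian_eigenvector_in_complement:
  assumes h: "hermitian A" and eig: "\<forall>u\<in>B. A *v u = of_real (qform A u) *s u"
    and "x \<noteq> 0" "\<forall>u\<in>B. cinner u x = 0"
  obtains v where "cinner v v = 1" "\<forall>u\<in>B. cinner u v = 0" "A *v v = of_real (qform A v) *s v"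
proof -
  obtain v where v: "cinner v v = 1" and vB: "\<forall>u\<in>B. cinner u v = 0"
    and vmax: "\<And>y. \<forall>u\<in>B. cinner u y = 0 \<Longrightarrow> qform A y \<le> qform A v * (norm y)\<^sup>2"
    using qform_max_on_orthogonal_complement[OF assms(3,4)] by blast
  define w where "w = A *v v - of_real (qform A v) *s v"
  \<comment> \<open>\<open>A\<close> preserves the orthogonal complement of its eigenvectors \<open>B\<close>\<close>
  have AvB: "cinner u (A *v v) = 0" if "u \<in> B" for u
    using that hermitian_cinner_adjoint[OF h, of u v] eig vB by (simp add: cinner_scale_left)
  have wB: "\<forall>u\<in>B. cinner u w = 0"
    using AvB vB by (simp add: w_def cinner_diff_right cinner_scale_right)
  have vw: "cinner v w = 0"
    by (simp add: w_def cinner_diff_right cinner_scale_right v hermitian_cinner_self_real[OF h])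
  have "cinner w (A *v v) = 0"
  proof (rule hermitian_max_stationary[OF h v vw])
    show "qform A (v + s *s w) \<le> qform A v * (norm (v + s *s w))\<^sup>2" for s
      using vB wB by (intro vmax) (simp add: cinner_add_right cinner_scale_right)
  qed
  moreover have "cinner w v = 0"
    using vw cinner_commute[of w v] by simp
  moreover have "cinner w w = cinner w (A *v v) - of_real (qform A v) * cinner w v"
    by (simp only: w_def cinner_diff_right cinner_scale_right)
  ultimately have "cinner w w = 0"
    by simp
  then have "w = 0"
    by (simp add: cinner_self_eq_zero_iff)
  then show thesis
    using v vB unfolding w_def by (intro that) simp_all
qed

text \<open>\<open>proj B = mat 1\<close> expresses completeness: \<open>x = (\<Sum>u\<in>B. \<langle>u, x\<rangle> u)\<close> for all \<open>x\<close>.\<close>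

definition eigenbasis :: "complex^'n^'n \<Rightarrow> (complex^'n) set \<Rightarrow> bool" where
  "eigenbasis A B \<longleftrightarrow> orthonormal B \<and> proj B = mat 1 \<and> (\<forall>u\<in>B. A *v u = of_real (qform A u) *s u)"

theorem hermitian_eigenbasis_exists:
  fixes A :: "complex^'n^'n"
  assumes h: "hermitian A"
  shows "\<exists>B. eigenbasis A B"
proof -
  have "\<exists>B'. eigenbasis A B'"
    if "orthonormal B" "\<forall>u\<in>B. A *v u = of_real (qform A u) *s u" for B :: "(complex^'n) set"
    using that
  proof (induction "DIM(complex^'n) - card B" arbitrary: B rule: less_induct)
    case less
    show ?case
    proof (cases "\<exists>x. x \<noteq> 0 \<and> (\<forall>u\<in>B. cinner u x = 0)")
      case True
      then obtain v where v: "cinner v v = 1" "\<forall>u\<in>B. cinner u v = 0"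
        and Av: "A *v v = of_real (qform A v) *s v"
        using hermitian_eigenvector_in_complement[OF h less.prems(2)] by metis
      have "v \<notin> B"
        using v by force
      have vB: "orthonormal (insert v B)"
        by (rule orthonormal_insert[OF less.prems(1) v])
      have "card (insert v B) \<le> DIM(complex^'n)"
        by (rule orthonormal_card_le[OF vB])
      then have "DIM(complex^'n) - card (insert v B) < DIM(complex^'n) - card B"
        using orthonormal_finite[OF less.prems(1)] \<open>v \<notin> B\<close> by simp
      then show ?thesis
        using less.hyps vB Av less.prems(2) by blast
    next
      case False
      have "proj B *v x = x" for x
      proof -
        have "\<forall>u\<in>B. cinner u (x - proj B *v x) = 0"
          by (simp add: cinner_diff_right cinner_proj[OF less.prems(1)])
        with False have "x - proj B *v x = 0"
          by blast
        then show ?thesis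
          by simp
      qed
      then have "proj B = mat 1"
        by (simp add: matrix_eq)
      with less.prems show ?thesis
        unfolding eigenbasis_def by blast
    qed
  qed
  from this[of "{}"] show ?thesis
    by (simp add: orthonormal_def)
qed

lemma qform_proj_eigenvectors:
  assumes "orthonormal K" "\<forall>u\<in>K. A *v u = of_real (qform A u) *s u"
  shows "qform A (proj K *v x) = (\<Sum>u\<in>K. qform A u * (cmod (cinner u x))\<^sup>2)"
proof -
  let ?y = "proj K *v x"
  have Ay: "A *v ?y = (\<Sum>u\<in>K. (cinner u x * of_real (qform A u)) *s u)"
    unfolding matrix_vector_mult_proj matrix_vector_mult_sum
    using assms(2) by (intro sum.cong) (simp_all add: matrix_vector_mult_scale)
  have "cinner ?y (A *v ?y) = (\<Sum>u\<in>K. (cinner u x * of_real (qform A u)) * cinner ?y u)"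
    unfolding Ay cinner_sum_right cinner_scale_right ..
  also have "\<dots> = (\<Sum>u\<in>K. of_real (qform A u) * (cnj (cinner u x) * cinner u x))"
    by (rule sum.cong[OF refl]) (simp add: cinner_commute[of ?y] cinner_proj[OF assms(1)] mult_ac)
  finally show ?thesis
    unfolding qform_def cnj_mult_self by (simp flip: of_real_mult of_real_sum)
qed

lemma eigenbasis_qform:
  assumes "eigenbasis A B"
  shows "qform A x = (\<Sum>u\<in>B. qform A u * (cmod (cinner u x))\<^sup>2)"
  using qform_proj_eigenvectors[of B A x] assms unfolding eigenbasis_def by simp

lemma trace_eq_sum_cinner:
  assumes "proj B = mat 1"
  shows "trace X = (\<Sum>u\<in>B. cinner u (X *v u))"
proof -
  have "trace X = (\<Sum>i\<in>UNIV. \<Sum>j\<in>UNIV. X $ i $ j * proj B $ j $ i)"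
    by (simp add: assms trace_def mat_def if_distrib cong: if_cong)
  also have "\<dots> = (\<Sum>i\<in>UNIV. \<Sum>u\<in>B. \<Sum>j\<in>UNIV. cnj (u $ i) * X $ i $ j * u $ j)"
    by (simp add: proj_def sum_distrib_left sum.swap[of _ B] mult_ac)
  also have "\<dots> = (\<Sum>u\<in>B. cinner u (X *v u))"
    by (simp add: sum.swap[of _ B] cinner_def matrix_vector_mult_def sum_distrib_left mult.assoc)
  finally show ?thesis .
qed

lemma density_trace_le:
  assumes "density \<rho>" and le: "\<And>x. qform M x \<le> qform N x + \<delta> * (norm x)\<^sup>2"
  shows "Re (trace (M ** \<rho>)) \<le> Re (trace (N ** \<rho>)) + \<delta>"
proof -
  have h: "hermitian \<rho>" and pos: "\<And>x. 0 \<le> qform \<rho> x" and tr: "trace \<rho> = 1"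
    using assms(1) unfolding density_def psd_iff_qform by auto
  obtain B where B: "eigenbasis \<rho> B"
    using hermitian_eigenbasis_exists[OF h] by blast
  have unit: "(norm u)\<^sup>2 = 1" if "u \<in> B" for u
    using B that unfolding eigenbasis_def orthonormal_def
    by (metis Re_complex_of_real cinner_self one_complex.sel(1))
  have tr_eq: "Re (trace (X ** \<rho>)) = (\<Sum>u\<in>B. qform \<rho> u * qform X u)" for X
  proof -
    have "trace (X ** \<rho>) = (\<Sum>u\<in>B. cinner u ((X ** \<rho>) *v u))"
      using B unfolding eigenbasis_def by (intro trace_eq_sum_cinner) simp
    also have "\<dots> = (\<Sum>u\<in>B. of_real (qform \<rho> u) * cinner u (X *v u))"
      using B unfolding eigenbasis_def
      by (intro sum.cong) (simp_all add: matrix_vector_mul_assoc[symmetric] matrix_vector_mult_scale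
          cinner_scale_right)
    finally show ?thesis
      by (simp add: qform_def)
  qed
  have "(\<Sum>u\<in>B. qform \<rho> u) = 1"
    using tr_eq[of "mat 1"] tr unit by (simp add: qform_mat_1)
  moreover have "qform M u \<le> qform N u + \<delta>" if "u \<in> B" for u
    using le[of u] unit[OF that] by simp
  then have "(\<Sum>u\<in>B. qform \<rho> u * qform M u) \<le> (\<Sum>u\<in>B. qform \<rho> u * (qform N u + \<delta>))"
    by (intro sum_mono mult_left_mono) (simp_all add: pos)
  ultimately show ?thesis
    by (simp add: tr_eq distrib_left sum.distrib flip: sum_distrib_right)
qed

section \<open>Spectral truncation\<close>

lemma sq_le_of_split_bound:
  fixes p a b q \<delta> :: real
  assumes "0 < \<delta>" "0 \<le> a" "0 \<le> q" "q\<^sup>2 \<le> \<delta>\<^sup>2 / 2 * b\<^sup>2"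
    and "0 \<le> p" "p \<le> a + q" "p\<^sup>2 \<le> a\<^sup>2 + b\<^sup>2"
  shows "p\<^sup>2 \<le> a\<^sup>2 + \<delta> * (a\<^sup>2 + b\<^sup>2)"
proof (cases "\<delta> \<le> 1")
  case True
  have "p\<^sup>2 \<le> (a + q)\<^sup>2"
    using assms by (intro power_mono) auto
  \<comment> \<open>AM-GM: \<open>2 a q \<le> \<delta> a\<^sup>2 + q\<^sup>2 / \<delta>\<close>\<close>
  have "0 \<le> (\<delta> * a - q)\<^sup>2 / \<delta>"
    using assms(1) by simp
  then have am_gm: "2 * a * q \<le> \<delta> * a\<^sup>2 + q\<^sup>2 / \<delta>"
    using assms(1) by (simp add: field_simps power2_eq_square)
  have "q\<^sup>2 * (1 + \<delta>) \<le> \<delta>\<^sup>2 / 2 * b\<^sup>2 * (1 + \<delta>)"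
    using assms by (intro mult_right_mono) auto
  also have "\<dots> = \<delta>\<^sup>2 * b\<^sup>2 * ((1 + \<delta>) / 2)"
    by simp
  also have "\<dots> \<le> \<delta>\<^sup>2 * b\<^sup>2"
    using True by (intro mult_left_le) auto
  finally have "q\<^sup>2 / \<delta> + q\<^sup>2 \<le> \<delta> * b\<^sup>2"
    using assms(1) by (simp add: field_simps power2_eq_square)
  with \<open>p\<^sup>2 \<le> (a + q)\<^sup>2\<close> am_gm show ?thesis
    by (simp add: power2_eq_square algebra_simps)
next
  case False
  have "a\<^sup>2 + b\<^sup>2 \<le> \<delta> * (a\<^sup>2 + b\<^sup>2)"
    using False mult_right_mono[of 1 \<delta> "a\<^sup>2 + b\<^sup>2"] by simp
  with assms(7) zero_le_power2[of a] show ?thesis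
    by linarith
qed

lemma orthonormal_basis_split:
  assumes B: "orthonormal B" "proj B = mat 1" and "J \<subseteq> B"
  shows "x = proj J *v x + proj (B - J) *v x"
    and "(norm x)\<^sup>2 = (norm (proj J *v x))\<^sup>2 + (norm (proj (B - J) *v x))\<^sup>2"
proof -
  have finite: "finite J" "finite (B - J)" and disjoint: "J \<inter> (B - J) = {}"
    and B_eq: "B = J \<union> (B - J)"
    using orthonormal_finite[OF B(1)] \<open>J \<subseteq> B\<close> by (auto intro: finite_subset)
  have "x = proj (J \<union> (B - J)) *v x"
    using B(2) B_eq by simp
  then show "x = proj J *v x + proj (B - J) *v x"
    unfolding proj_union[OF finite disjoint] by (simp add: matrix_vector_mult_add_rdistrib)
  show "(norm x)\<^sup>2 = (norm (proj J *v x))\<^sup>2 + (norm (proj (B - J) *v x))\<^sup>2"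
    using norm_proj_sq[OF B(1), of x] B(2) orthonormal_subset[OF B(1)] \<open>J \<subseteq> B\<close>
      sum.subset_diff[OF \<open>J \<subseteq> B\<close> orthonormal_finite[OF B(1)]]
    by (simp add: norm_proj_sq add.commute)
qed

lemma qform_proj_eigenvectors_le:
  assumes "orthonormal K" "\<forall>u\<in>K. A *v u = of_real (qform A u) *s u" "\<forall>u\<in>K. qform A u \<le> c"
  shows "qform A (proj K *v x) \<le> c * (norm (proj K *v x))\<^sup>2"
proof -
  have "qform A (proj K *v x) = (\<Sum>u\<in>K. qform A u * (cmod (cinner u x))\<^sup>2)"
    by (rule qform_proj_eigenvectors[OF assms(1,2)])
  also have "\<dots> \<le> (\<Sum>u\<in>K. c * (cmod (cinner u x))\<^sup>2)"
    using assms(3) by (intro sum_mono mult_right_mono) auto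
  also have "\<dots> = c * (norm (proj K *v x))\<^sup>2"
    unfolding norm_proj_sq[OF assms(1)] sum_distrib_left ..
  finally show ?thesis .
qed

lemma projector_qform_le_spectral_cut:
  assumes P: "is_projector P" and B: "eigenbasis A B" and P_le: "\<And>x. qform P x \<le> qform A x"
    and "0 < \<delta>"
  shows "qform P x \<le> qform (proj {u\<in>B. \<delta>\<^sup>2 / 2 \<le> qform A u}) x + \<delta> * (norm x)\<^sup>2"
proof -
  define J where "J = {u\<in>B. \<delta>\<^sup>2 / 2 \<le> qform A u}"
  define y where "y = proj J *v x"
  define z where "z = proj (B - J) *v x"
  have oB: "orthonormal B" and "proj B = mat 1"
    and eig: "\<forall>u\<in>B. A *v u = of_real (qform A u) *s u"
    using B unfolding eigenbasis_def by auto
  have "J \<subseteq> B"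
    unfolding J_def by blast
  note split = orthonormal_basis_split[OF oB \<open>proj B = mat 1\<close> this, of x, folded y_def z_def]
  have "(norm (P *v z))\<^sup>2 \<le> qform A z"
    using P_le[of z] by (simp add: projector_qform[OF P])
  also have "\<dots> \<le> \<delta>\<^sup>2 / 2 * (norm z)\<^sup>2"
    unfolding z_def using eig orthonormal_subset[OF oB]
    by (intro qform_proj_eigenvectors_le) (auto simp: J_def)
  finally have Pz: "(norm (P *v z))\<^sup>2 \<le> \<delta>\<^sup>2 / 2 * (norm z)\<^sup>2" .
  have "norm (P *v x) \<le> norm (P *v y) + norm (P *v z)"
    unfolding split(1) matrix_vector_right_distrib by (rule norm_triangle_ineq)
  also have "\<dots> \<le> norm y + norm (P *v z)"
    using projector_norm_le[OF P] by simp
  moreover have "(norm (P *v x))\<^sup>2 \<le> (norm y)\<^sup>2 + (norm z)\<^sup>2"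
    using power_mono[OF projector_norm_le[OF P, of x] norm_ge_zero, of 2] split(2) by simp
  ultimately have "(norm (P *v x))\<^sup>2 \<le> (norm y)\<^sup>2 + \<delta> * ((norm y)\<^sup>2 + (norm z)\<^sup>2)"
    using Pz \<open>0 < \<delta>\<close> by (intro sq_le_of_split_bound) auto
  then show ?thesis
    unfolding projector_qform[OF P] J_def[symmetric] split(2)
      projector_qform[OF is_projector_proj[OF orthonormal_subset[OF oB \<open>J \<subseteq> B\<close>]]] y_def .
qed

lemma proj_spectral_cut_loewner_le:
  assumes A: "psd A" and B: "eigenbasis A B" and "0 < c"
  shows "loewner_le (proj {u\<in>B. c \<le> qform A u}) ((1 / c) *\<^sub>R A)"
proof (rule loewner_le_of_qform)
  define J where "J = {u\<in>B. c \<le> qform A u}"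
  show "hermitian A" "hermitian (proj J)"
    using A by (simp_all add: psd_iff_qform hermitian_proj)
  fix x
  have "qform (proj J) x = (\<Sum>u\<in>J. (cmod (cinner u x))\<^sup>2)"
    by (rule qform_proj)
  also have "\<dots> \<le> (\<Sum>u\<in>J. 1 / c * (qform A u * (cmod (cinner u x))\<^sup>2))"
    using \<open>0 < c\<close> by (intro sum_mono) (auto simp: J_def field_simps intro: mult_right_mono)
  also have "\<dots> \<le> (\<Sum>u\<in>B. 1 / c * (qform A u * (cmod (cinner u x))\<^sup>2))"
    using A \<open>0 < c\<close> orthonormal_finite B unfolding psd_iff_qform eigenbasis_def J_def
    by (intro sum_mono2) auto
  also have "\<dots> = 1 / c * qform A x"
    unfolding eigenbasis_qform[OF B, of x] sum_distrib_left ..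
  finally show "qform (proj J) x \<le> 1 / c * qform A x" .
qed

theorem lemma2:
  fixes P1 P2 :: "complex^'n^'n" and \<delta> :: real
  assumes "is_projector P1" and "is_projector P2" and "\<delta> > 0"
  shows "\<exists>P::complex^'n^'n. is_projector P \<and>
     (\<forall>\<rho>::complex^'n^'n. density \<rho> \<longrightarrow>
        Re (trace (P ** \<rho>)) \<ge> max (Re (trace (P1 ** \<rho>))) (Re (trace (P2 ** \<rho>))) - \<delta>) \<and>
     loewner_le P ((2 / \<delta>\<^sup>2) *\<^sub>R (P1 + P2))"
proof -
  have le_sum: "qform P1 x \<le> qform (P1 + P2) x" "qform P2 x \<le> qform (P1 + P2) x" for x
    using assms(1,2) by (simp_all add: qform_add projector_qform)
  have psd: "psd (P1 + P2)"
    unfolding psd_iff_qform qform_add projector_qform[OF assms(1)] projector_qform[OF assms(2)]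
    using assms(1,2) by (simp add: hermitian_add projector_hermitian)
  then obtain B where B: "eigenbasis (P1 + P2) B"
    using hermitian_eigenbasis_exists unfolding psd_iff_qform by blast
  define J where "J = {u\<in>B. \<delta>\<^sup>2 / 2 \<le> qform (P1 + P2) u}"
  have "orthonormal J"
    using B orthonormal_subset[of B J] unfolding eigenbasis_def J_def by auto
  then have proj: "is_projector (proj J)"
    by (rule is_projector_proj)
  have tr: "Re (trace (P ** \<rho>)) \<le> Re (trace (proj J ** \<rho>)) + \<delta>"
    if "is_projector P" "\<And>x. qform P x \<le> qform (P1 + P2) x" "density \<rho>" for P \<rho>
    using density_trace_le[OF that(3) projector_qform_le_spectral_cut[OF that(1) B that(2) assms(3)]]
    unfolding J_def .
  have loewner: "loewner_le (proj J) ((2 / \<delta>\<^sup>2) *\<^sub>R (P1 + P2))"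
    using proj_spectral_cut_loewner_le[OF psd B, of "\<delta>\<^sup>2 / 2"] assms(3) by (simp add: J_def)
  show ?thesis
  proof (intro exI[of _ "proj J"] conjI allI impI proj loewner)
    fix \<rho> :: "complex^'n^'n"
    assume "density \<rho>"
    show "max (Re (trace (P1 ** \<rho>))) (Re (trace (P2 ** \<rho>))) - \<delta> \<le> Re (trace (proj J ** \<rho>))"
      using tr[OF assms(1) le_sum(1) \<open>density \<rho>\<close>] tr[OF assms(2) le_sum(2) \<open>density \<rho>\<close>]
      by (simp add: max_def)
  qed
qed

end
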